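(* Let $\mathbf{x}_1,\dots,\mathbf{x}_n$ be examples, let $f$ be a feature map sending each example to a vector in $\mathbb{R}^d$, and let $W^I=(\mathbf{w}^I_1,\dots,\mathbf{w}^I_n)\in\mathbb{R}^{d\times n}$. Each example $\mathbf{x}_i$ has instance label $y_i^I=i$ and a target label $y_i^F\in\{1,\dots,F\}$, where every target class contains exactly $z$ examples, so that $zF=n$. Define \[\Pr\{y_i^I\mid f(\mathbf{x}_i),W^I\}=\frac{\exp(f(\mathbf{x}_i)^\top\mathbf{w}^I_{y_i^I})}{\sum_{j=1}^n\exp(f(\mathbf{x}_i)^\top\mathbf{w}^I_j)},\qquad \Pr\{y_i^F\mid f(\mathbf{x}_i),W^I\}=\frac{\exp(f(\mathbf{x}_i)^\top\bar{\mathbf{w}}^I_{y_i^F})}{\sum_{s=1}^F\exp(f(\mathbf{x}_i)^\top\bar{\mathbf{w}}^I_s)},\] where $\bar{\mathbf{w}}^I_s=\frac1z\sum_{j:\,y_j^F=s}\mathbf{w}^I_j$. If $\Pr\{y_i^I\mid f(\mathbf{x}_i),W^I\}\ge\alpha$ for all $i$, then for all $i$, \[\Pr\{y_i^F\mid f(\mathbf{x}_i),W^I\}\ge z\alpha\exp\big(f(\mathbf{x}_i)^\top(\bar{\mathbf{w}}^I_{y_i^F}-\mathbf{w}^I_{y_i^I})\big).\]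
   Context: This setting models instance classification: each of the $n$ examples is treated as its own class, $f$ is the feature extractor (the convolutional layers of a network) and $W^I$ is the weight matrix of the final fully-connected layer, with no bias term. The target-class probability is computed with the class proxy $\bar{\mathbf{w}}^I_s$, the mean of the instance weight vectors belonging to target class $s$. *)

theory Defs
  imports "HOL-Analysis.Analysis"
begin

text \<open>Examples are indexed by 0..n-1 (instance label of example i is i itself);
 target classes are indexed by 0..F-1. fx i is the feature vector f(x_i),
 w j is the j-th column of W^I, yF i is the target label of example i.\<close>

definition inst_prob :: "nat \<Rightarrow> (nat \<Rightarrow> real^'d) \<Rightarrow> (nat \<Rightarrow> real^'d) \<Rightarrow> nat \<Rightarrow> real" where
  "inst_prob n fx w i = exp (fx i \<bullet> w i) / (\<Sum>j<n. exp (fx i \<bullet> w j))"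

definition class_proxy :: "nat \<Rightarrow> nat \<Rightarrow> (nat \<Rightarrow> nat) \<Rightarrow> (nat \<Rightarrow> real^'d) \<Rightarrow> nat \<Rightarrow> real^'d" where
  "class_proxy n z yF w s = (1 / real z) *\<^sub>R (\<Sum>j\<in>{j. j < n \<and> yF j = s}. w j)"

definition target_prob :: "nat \<Rightarrow> nat \<Rightarrow> nat \<Rightarrow> (nat \<Rightarrow> nat) \<Rightarrow> (nat \<Rightarrow> real^'d) \<Rightarrow> (nat \<Rightarrow> real^'d) \<Rightarrow> nat \<Rightarrow> real" where
  "target_prob n F z yF fx w i =
     exp (fx i \<bullet> class_proxy n z yF w (yF i)) / (\<Sum>s<F. exp (fx i \<bullet> class_proxy n z yF w s))"

end

theory Submission
  imports Defs
begin

text \<open>Write \<open>a\<^sub>j = f(x\<^sub>i)\<^sup>T w\<^sub>j\<close>. The score of class \<open>s\<close> is the mean of the \<open>a\<^sub>j\<close> over the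
  \<open>z\<close> members of \<open>s\<close>, so by convexity of \<open>exp\<close> (Jensen) its exponential is at most the mean of
  the \<open>exp a\<^sub>j\<close>. Summing over the classes, which partition the examples, the class softmax
  denominator is at most \<open>1/z\<close> times the instance softmax denominator \<open>S\<close>. Hence the target
  probability is at least \<open>z exp(f(x\<^sub>i)\<^sup>T w\<^sub>s) / S = z \<cdot> (exp a\<^sub>i / S) \<cdot> exp(f(x\<^sub>i)\<^sup>T w\<^sub>s - a\<^sub>i)\<close>,
  and \<open>exp a\<^sub>i / S\<close> is the instance probability.\<close>

lemma exp_mean_le_mean_exp:
  fixes a :: "'a \<Rightarrow> real"
  assumes "finite S" "S \<noteq> {}"
  shows "exp ((\<Sum>j\<in>S. a j) / card S) \<le> (\<Sum>j\<in>S. exp (a j)) / card S"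
proof -
  have "card S > 0" using assms by (simp add: card_gt_0_iff)
  then have "exp (\<Sum>j\<in>S. (1 / card S) *\<^sub>R a j) \<le> (\<Sum>j\<in>S. (1 / card S) * exp (a j))"
    by (intro convex_on_sum[OF assms exp_convex]) auto
  then show ?thesis by (simp add: sum_distrib_left sum_divide_distrib)
qed

lemma sum_exp_class_means_le:
  fixes a :: "nat \<Rightarrow> real" and c :: "nat \<Rightarrow> nat"
  assumes labels: "\<forall>i<n. c i < F"
    and class_size: "\<forall>s<F. card {j. j < n \<and> c j = s} = z"
    and "z > 0"
  shows "(\<Sum>s<F. exp ((\<Sum>j | j < n \<and> c j = s. a j) / z)) \<le> (\<Sum>j<n. exp (a j)) / z"
proof -
  have "exp ((\<Sum>j | j < n \<and> c j = s. a j) / z) \<le> (\<Sum>j | j < n \<and> c j = s. exp (a j)) / z"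
    if "s < F" for s
  proof -
    have "card {j. j < n \<and> c j = s} = z" using class_size that by blast
    moreover from this have "{j. j < n \<and> c j = s} \<noteq> {}" using \<open>z > 0\<close> by (metis card.empty less_irrefl)
    ultimately show ?thesis using exp_mean_le_mean_exp[of "{j. j < n \<and> c j = s}" a] by simp
  qed
  then have "(\<Sum>s<F. exp ((\<Sum>j | j < n \<and> c j = s. a j) / z))
      \<le> (\<Sum>s<F. (\<Sum>j | j < n \<and> c j = s. exp (a j)) / z)"
    by (intro sum_mono) auto
  also have "\<dots> = (\<Sum>s<F. \<Sum>j | j < n \<and> c j = s. exp (a j)) / z"
    by (rule sum_divide_distrib[symmetric])
  also have "(\<Sum>s<F. \<Sum>j | j < n \<and> c j = s. exp (a j)) = (\<Sum>j<n. exp (a j))"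
    using sum.group[of "{..<n}" "{..<F}" c "\<lambda>j. exp (a j)"] labels by auto
  finally show ?thesis .
qed

lemma inner_class_proxy:
  "x \<bullet> class_proxy n z yF w s = (\<Sum>j | j < n \<and> yF j = s. x \<bullet> w j) / z"
  by (simp add: class_proxy_def inner_sum_right)

lemma target_prob_ge_inst_prob:
  assumes labels: "\<forall>i<n. yF i < F"
    and class_size: "\<forall>s<F. card {j. j < n \<and> yF j = s} = z"
    and i: "i < n"
  shows "target_prob n F z yF fx w i
           \<ge> real z * inst_prob n fx w i * exp (fx i \<bullet> (class_proxy n z yF w (yF i) - w i))"
proof -
  define a where "a j = fx i \<bullet> w j" for j
  define m where "m = fx i \<bullet> class_proxy n z yF w (yF i)"
  define S where "S = (\<Sum>j<n. exp (a j))"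
  define T where "T = (\<Sum>s<F. exp (fx i \<bullet> class_proxy n z yF w s))"
  have "i \<in> {j. j < n \<and> yF j = yF i}" using i by simp
  then have "z > 0"
    using class_size labels i
    by (metis card_gt_0_iff empty_iff finite_Collect_conjI finite_Collect_less_nat)
  have "S > 0" unfolding S_def using i by (intro sum_pos) auto
  have "T > 0" unfolding T_def using labels i by (intro sum_pos) auto
  have "T \<le> S / z"
    using sum_exp_class_means_le[OF labels class_size \<open>z > 0\<close>, of a]
    unfolding T_def S_def a_def by (simp add: inner_class_proxy)
  then have "exp m / (S / z) \<le> exp m / T"
    using \<open>T > 0\<close> \<open>S > 0\<close> \<open>z > 0\<close> by (intro divide_left_mono) auto
  moreover have "real z * inst_prob n fx w i * exp (m - a i) = exp m / (S / z)"
    unfolding inst_prob_def a_def S_def using \<open>S > 0\<close> by (simp add: exp_diff field_simps)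
  ultimately show ?thesis
    unfolding target_prob_def m_def T_def a_def by (simp add: inner_diff_right)
qed

theorem lemma1:
  fixes n F z :: nat and yF :: "nat \<Rightarrow> nat"
    and fx w :: "nat \<Rightarrow> real^'d" and \<alpha> :: real
  assumes labels: "\<forall>i<n. yF i < F"
    and class_size: "\<forall>s<F. card {j. j < n \<and> yF j = s} = z"
    and zF: "z * F = n"
    and hyp: "\<forall>i<n. inst_prob n fx w i \<ge> \<alpha>"
  shows "\<forall>i<n. target_prob n F z yF fx w i
            \<ge> real z * \<alpha> * exp (fx i \<bullet> (class_proxy n z yF w (yF i) - w i))"
proof (intro allI impI)
  fix i assume "i < n"
  have "real z * \<alpha> * exp (fx i \<bullet> (class_proxy n z yF w (yF i) - w i))
      \<le> real z * inst_prob n fx w i * exp (fx i \<bullet> (class_proxy n z yF w (yF i) - w i))"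
    using hyp \<open>i < n\<close> by (intro mult_right_mono mult_left_mono) auto
  also have "\<dots> \<le> target_prob n F z yF fx w i"
    using target_prob_ge_inst_prob[OF labels class_size \<open>i < n\<close>] .
  finally show "target_prob n F z yF fx w i
      \<ge> real z * \<alpha> * exp (fx i \<bullet> (class_proxy n z yF w (yF i) - w i))" .
qed

end
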